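(* Let $p$ be an odd prime, $G$ a finite group and $P$ a Sylow $p$-subgroup of $G$. Assume that $P$ is nontrivial and that $N_G(P)/PC_G(P)$ has odd order. Then no nonidentity element of $Z(P)$ is real in $G$.
   Context: An element $t \in G$ is real in $G$ if $t$ is $G$-conjugate to $t^{-1}$. $Z(P)$ is the center of $P$. *)

theory Defs
  imports "HOL-Algebra.Sylow" "HOL-Algebra.Group_Action" "HOL-Computational_Algebra.Primes"
begin

definition centralizer :: "('a, 'b) monoid_scheme \<Rightarrow> 'a set \<Rightarrow> 'a set" where
  "centralizer G H = {g \<in> carrier G. \<forall>h \<in> H. g \<otimes>\<^bsub>G\<^esub> h = h \<otimes>\<^bsub>G\<^esub> g}"

definition group_center :: "('a, 'b) monoid_scheme \<Rightarrow> 'a set \<Rightarrow> 'a set" where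
  "group_center G P = {z \<in> P. \<forall>h \<in> P. z \<otimes>\<^bsub>G\<^esub> h = h \<otimes>\<^bsub>G\<^esub> z}"

definition sylow_subgroup :: "('a, 'b) monoid_scheme \<Rightarrow> nat \<Rightarrow> 'a set \<Rightarrow> bool" where
  "sylow_subgroup G p P \<longleftrightarrow> subgroup P G \<and> (\<exists>a. card P = p ^ a) \<and>
     \<not> p dvd (order G div card P)"

definition real_in :: "('a, 'b) monoid_scheme \<Rightarrow> 'a \<Rightarrow> bool" where
  "real_in G t \<longleftrightarrow> t \<in> carrier G \<and>
     (\<exists>g \<in> carrier G. g \<otimes>\<^bsub>G\<^esub> t \<otimes>\<^bsub>G\<^esub> inv\<^bsub>G\<^esub> g = inv\<^bsub>G\<^esub> t)"

end

theory Submission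
  imports Defs "HOL-Algebra.Zassenhaus" "HOL-Algebra.Multiplicative_Group"
begin

text \<open>
  Suppose \<open>z \<in> Z(P)\<close>, \<open>z \<noteq> 1\<close>, is inverted by \<open>g\<close>. Then \<open>gPg\<^sup>-\<^sup>1\<close> also centralizes \<open>z\<close>, so \<open>P\<close> and
  \<open>gPg\<^sup>-\<^sup>1\<close> are Sylow subgroups of \<open>C = C\<^sub>G(z)\<close>; counting fixed points of \<open>P\<close> on the right
  \<open>P\<close>-cosets inside \<open>Cg\<close> (Sylow conjugacy plus the Frattini argument) gives \<open>c \<in> C\<close> such that
  \<open>n = cg\<close> normalizes \<open>P\<close>; \<open>n\<close> still inverts \<open>z\<close>. As \<open>|P|\<close> is odd, \<open>z \<noteq> z\<^sup>-\<^sup>1\<close>, so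
  \<open>N\<^sub>G(P) \<inter> C\<close> has index 2 in the subgroup of elements of \<open>N\<^sub>G(P)\<close> sending \<open>z\<close> to \<open>z\<^sup>\<plusminus>\<^sup>1\<close>.
  Since \<open>PC\<^sub>G(P) \<subseteq> N\<^sub>G(P) \<inter> C\<close>, the order of \<open>N\<^sub>G(P)/PC\<^sub>G(P)\<close> would be even.
\<close>

definition conjugate :: "('a, 'b) monoid_scheme \<Rightarrow> 'a \<Rightarrow> 'a \<Rightarrow> 'a" where
  "conjugate G g x = g \<otimes>\<^bsub>G\<^esub> x \<otimes>\<^bsub>G\<^esub> inv\<^bsub>G\<^esub> g"

lemma group_actionI:
  fixes G (structure)
  assumes "group G"
    and closed: "\<And>g x. g \<in> carrier G \<Longrightarrow> x \<in> E \<Longrightarrow> f g x \<in> E"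
    and one: "\<And>x. x \<in> E \<Longrightarrow> f \<one> x = x"
    and mult: "\<And>g h x. g \<in> carrier G \<Longrightarrow> h \<in> carrier G \<Longrightarrow> x \<in> E \<Longrightarrow>
      f (g \<otimes> h) x = f g (f h x)"
  shows "group_action G E (\<lambda>g. \<lambda>x\<in>E. f g x)"
proof -
  interpret group G by fact
  have bij: "(\<lambda>x\<in>E. f g x) \<in> Bij E" if g: "g \<in> carrier G" for g
  proof -
    have "f g (f (inv g) x) = x" "f (inv g) (f g x) = x" if "x \<in> E" for x
      using mult[of g "inv g" x] mult[of "inv g" g x] one g that by simp_all
    then have "bij_betw (f g) E E"
      by (intro bij_betwI[where g = "f (inv g)"]) (auto simp: closed g)
    then show ?thesis by (simp add: Bij_def)
  qed
  have "(\<lambda>g. \<lambda>x\<in>E. f g x) \<in> hom G (BijGroup E)"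
  proof (rule homI)
    fix g h assume "g \<in> carrier G" "h \<in> carrier G"
    then show "(\<lambda>x\<in>E. f (g \<otimes> h) x) = (\<lambda>x\<in>E. f g x) \<otimes>\<^bsub>BijGroup E\<^esub> (\<lambda>x\<in>E. f h x)"
      using bij by (auto simp: BijGroup_def compose_def mult closed)
  qed (auto simp: BijGroup_def bij)
  then show ?thesis
    by (simp add: group_action_def group_hom_def group_hom_axioms_def group_BijGroup)
qed

lemma (in group_action) p_group_fixed_point:
  assumes "finite E" and "prime p" and "order G = p ^ a" and "\<not> p dvd card E"
  shows "\<exists>x\<in>E. \<forall>g\<in>carrier G. \<phi> g x = x"
proof (rule ccontr)
  assume no_fixed_point: "\<not> ?thesis"
  have "p dvd card orb" if orbit: "orb \<in> orbits G E \<phi>" for orb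
  proof -
    obtain x where x: "x \<in> E" and orb_eq: "orb = orbit G \<phi> x"
      using orbit unfolding orbits_def by blast
    have "card orb dvd p ^ a"
      using orbit_stabilizer_theorem[OF x] orb_eq assms(3) by (metis dvd_triv_left)
    then obtain i where i: "card orb = p ^ i"
      using divides_primepow_nat[OF assms(2)] by blast
    have "card orb \<noteq> 1"
    proof
      assume "card orb = 1"
      moreover have "x \<in> orb" "\<And>g. g \<in> carrier G \<Longrightarrow> \<phi> g x \<in> orb"
        using orbit_refl[OF x] orb_eq unfolding orbit_def by auto
      ultimately have "\<forall>g\<in>carrier G. \<phi> g x = x"
        by (metis card_1_singletonE singletonD)
      then show False using no_fixed_point x by blast
    qed
    with i show ?thesis by (cases i) auto
  qed
  then have "p dvd (\<Sum>orb\<in>orbits G E \<phi>. card orb)" by (simp add: dvd_sum)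
  also have "(\<Sum>orb\<in>orbits G E \<phi>. card orb) = (\<Sum>orb\<in>orbits G E \<phi>. \<Sum>x\<in>orb. 1)"
    by simp
  also have "\<dots> = (\<Sum>x\<in>E. 1)" by (rule disjoint_sum[OF assms(1)])
  finally show False using assms(4) by simp
qed

context group begin

lemma conjugate_closed [simp]:
  "g \<in> carrier G \<Longrightarrow> x \<in> carrier G \<Longrightarrow> conjugate G g x \<in> carrier G"
  unfolding conjugate_def by simp

lemma conjugate_one [simp]: "x \<in> carrier G \<Longrightarrow> conjugate G \<one> x = x"
  unfolding conjugate_def by simp

lemma conjugate_mult:
  "g \<in> carrier G \<Longrightarrow> h \<in> carrier G \<Longrightarrow> x \<in> carrier G \<Longrightarrow>
    conjugate G (g \<otimes> h) x = conjugate G g (conjugate G h x)"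
  unfolding conjugate_def by (simp add: m_assoc inv_mult_group)

lemma conjugate_inv:
  "g \<in> carrier G \<Longrightarrow> x \<in> carrier G \<Longrightarrow> conjugate G g (inv x) = inv (conjugate G g x)"
  unfolding conjugate_def by (simp add: m_assoc inv_mult_group)

lemma conjugate_inv_conjugate [simp]:
  "g \<in> carrier G \<Longrightarrow> x \<in> carrier G \<Longrightarrow> conjugate G (inv g) (conjugate G g x) = x"
  using conjugate_mult[of "inv g" g x] by simp

lemma conjugate_eq_iff:
  "g \<in> carrier G \<Longrightarrow> x \<in> carrier G \<Longrightarrow> y \<in> carrier G \<Longrightarrow>
    conjugate G g x = y \<longleftrightarrow> g \<otimes> x = y \<otimes> g"
  unfolding conjugate_def by (metis inv_solve_right m_closed inv_closed)

lemma centralizer_eq: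
  assumes "H \<subseteq> carrier G"
  shows "centralizer G H = {g \<in> carrier G. \<forall>h\<in>H. conjugate G g h = h}"
  using assms conjugate_eq_iff unfolding centralizer_def by blast

lemma centralizer_subgroup:
  assumes "H \<subseteq> carrier G"
  shows "subgroup (centralizer G H) G"
proof -
  let ?C = "{g \<in> carrier G. \<forall>h\<in>H. conjugate G g h = h}"
  have "subgroup ?C G"
  proof (rule subgroupI)
    have "\<one> \<in> ?C" using assms by auto
    then show "?C \<noteq> {}" by blast
    fix a b assume a: "a \<in> ?C" and b: "b \<in> ?C"
    have "conjugate G (inv a) h = h" if "h \<in> H" for h
    proof -
      have "h \<in> carrier G" "conjugate G a h = h" using a that assms by auto
      then show ?thesis using conjugate_inv_conjugate[of a h] a by simp
    qed
    then show "inv a \<in> ?C" using a by simp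
    show "a \<otimes> b \<in> ?C" using a b assms by (auto simp: conjugate_mult subset_iff)
  qed auto
  then show ?thesis by (simp add: centralizer_eq[OF assms])
qed

lemma normalizerI:
  assumes "H \<subseteq> carrier G" and "x \<in> carrier G" and "x <#\<^bsub>G\<^esub> H = H #> x"
  shows "x \<in> normalizer G H"
proof -
  have "x <#\<^bsub>G\<^esub> H #> inv x = H #> x #> inv x" using assms(3) by simp
  also have "\<dots> = H" using assms by (simp add: coset_mult_assoc)
  finally have "x <#\<^bsub>G\<^esub> H #> inv x = H" .
  then show ?thesis
    using assms(1,2) unfolding normalizer_def stabilizer_def by simp
qed

lemma centralizer_subset_normalizer:
  assumes "H \<subseteq> carrier G"
  shows "centralizer G H \<subseteq> normalizer G H"
proof
  fix c assume "c \<in> centralizer G H"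
  then have "c \<in> carrier G" and "c <#\<^bsub>G\<^esub> H = H #> c"
    unfolding centralizer_def l_coset_def r_coset_def by auto
  then show "c \<in> normalizer G H" using normalizerI assms by blast
qed

lemma subgroup_set_mult_centralizer:
  assumes "subgroup P G"
  shows "subgroup (P <#> centralizer G P) (G\<lparr>carrier := normalizer G P\<rparr>)"
proof -
  have P: "P \<subseteq> carrier G" using assms subgroup.subset by blast
  have "subgroup (centralizer G P) (G\<lparr>carrier := normalizer G P\<rparr>)"
    by (intro subgroup_incl centralizer_subgroup centralizer_subset_normalizer normalizer_imp_subgroup P)
  then show ?thesis
    using group.mult_norm_subgroup[OF subgroup_imp_group[OF normalizer_imp_subgroup[OF P]]]
      subgroup_in_normalizer[OF assms] by simp
qed

lemma card_l_coset:
  assumes "H \<subseteq> carrier G" and "x \<in> carrier G"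
  shows "card (x <#\<^bsub>G\<^esub> H) = card H"
proof -
  have "inj_on (\<lambda>h. x \<otimes> h) H" using assms by (intro inj_onI) (metis Units_eq Units_l_cancel subsetD)
  then show ?thesis
    unfolding l_coset_def UNION_singleton_eq_range by (rule card_image)
qed

lemma card_subgroup_dvd:
  assumes "subgroup A G" and "subgroup B G" and "A \<subseteq> B"
  shows "card A dvd card B"
proof -
  have "card (rcosets\<^bsub>G\<lparr>carrier := B\<rparr>\<^esub> A) * card A = card B"
    using group.lagrange[OF subgroup_imp_group[OF assms(2)] subgroup_incl[OF assms]]
    by (simp add: order_def)
  then show ?thesis by (metis dvd_triv_right)
qed

lemma card_rcosets_image:
  assumes "subgroup H G" and "X \<subseteq> carrier G" and "finite X"
    and closed: "\<And>h x. h \<in> H \<Longrightarrow> x \<in> X \<Longrightarrow> h \<otimes> x \<in> X"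
  shows "card ((\<lambda>x. H #> x) ` X) * card H = card X"
proof -
  have H: "H \<subseteq> carrier G" using assms(1) subgroup.subset by blast
  have cosets: "(\<lambda>x. H #> x) ` X \<subseteq> rcosets H"
    using rcosetsI[OF H] assms(2) by blast
  have union: "\<Union>((\<lambda>x. H #> x) ` X) = X"
  proof
    show "\<Union>((\<lambda>x. H #> x) ` X) \<subseteq> X" using closed unfolding r_coset_def by auto
    show "X \<subseteq> \<Union>((\<lambda>x. H #> x) ` X)" using rcos_self[OF _ assms(1)] assms(2) by blast
  qed
  have "card H * card ((\<lambda>x. H #> x) ` X) = card (\<Union>((\<lambda>x. H #> x) ` X))"
  proof (rule card_partition)
    show "card c = card H" if "c \<in> (\<lambda>x. H #> x) ` X" for c
      using card_rcosets_equal[OF _ H] cosets that by auto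
    show "c1 \<inter> c2 = {}"
      if "c1 \<in> (\<lambda>x. H #> x) ` X" "c2 \<in> (\<lambda>x. H #> x) ` X" "c1 \<noteq> c2" for c1 c2
      using rcos_disjoint[OF assms(1)] cosets that unfolding pairwise_def disjnt_def by blast
  qed (use union assms(3) in auto)
  then show ?thesis using union by (simp add: mult.commute)
qed

lemma rcoset_fixed_imp_normalizer:
  assumes "subgroup H G" and "finite H" and "x \<in> carrier G"
    and fixed: "\<And>h. h \<in> H \<Longrightarrow> H #> x #> h = H #> x"
  shows "x \<in> normalizer G H"
proof -
  have H: "H \<subseteq> carrier G" using assms(1) subgroup.subset by blast
  have "x <#\<^bsub>G\<^esub> H \<subseteq> H #> x"
  proof
    fix y assume "y \<in> x <#\<^bsub>G\<^esub> H"
    then obtain h where h: "h \<in> H" and y: "y = x \<otimes> h" unfolding l_coset_def by blast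
    have "x \<in> H #> x" using rcos_self[OF assms(3,1)] .
    then have "x \<otimes> h \<in> H #> x #> h" unfolding r_coset_def by blast
    then show "y \<in> H #> x" using fixed[OF h] y by simp
  qed
  moreover have "card (x <#\<^bsub>G\<^esub> H) = card (H #> x)"
    using card_l_coset card_rcosets_equal[OF rcosetsI] H assms(3) by simp
  moreover have "finite (H #> x)"
    using rcosets_finite[OF rcosetsI] H assms(2,3) by blast
  ultimately have "x <#\<^bsub>G\<^esub> H = H #> x" by (simp add: card_subset_eq)
  then show ?thesis using normalizerI H assms(3) by blast
qed

lemma sylow_index_not_dvd_in_subgroup:
  assumes "finite (carrier G)" and "sylow_subgroup G p P" and "subgroup C G" and "P \<subseteq> C"
  shows "\<not> p dvd card C div card P"
proof
  assume "p dvd card C div card P"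
  have P: "subgroup P G" and not_dvd: "\<not> p dvd order G div card P"
    using assms(2) unfolding sylow_subgroup_def by blast+
  have "card P dvd card C" by (rule card_subgroup_dvd[OF P assms(3,4)])
  moreover have "card P > 0"
    using finite_subset[OF subgroup.subset[OF P] assms(1)] subgroup.one_closed[OF P]
    by (auto simp: card_gt_0_iff)
  ultimately have "order G div card P = card (rcosets C) * (card C div card P)"
    using lagrange[OF assms(3)] by (metis div_mult_swap)
  then show False using not_dvd \<open>p dvd card C div card P\<close> by simp
qed

lemma conjugate_inv_of_inverted:
  assumes "g \<in> carrier G" and "z \<in> carrier G" and "conjugate G g z = inv z"
  shows "conjugate G (inv g) z = inv z"
proof -
  have "conjugate G (inv g) (inv z) = z"
    using conjugate_inv_conjugate[of g z] assms by simp
  then show ?thesis using conjugate_inv[of "inv g" "inv z"] assms by simp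
qed

lemma conjugate_centralizer_of_inverted:
  assumes "g \<in> carrier G" and "z \<in> carrier G" and "conjugate G g z = inv z"
  shows "conjugate G g ` centralizer G {z} \<subseteq> centralizer G {z}"
proof
  fix y assume "y \<in> conjugate G g ` centralizer G {z}"
  then obtain h where h: "h \<in> carrier G" "conjugate G h z = z" and y: "y = conjugate G g h"
    using centralizer_eq[of "{z}"] assms(2) by auto
  have "conjugate G y z = conjugate G g (conjugate G h (conjugate G (inv g) z))"
    using assms h unfolding y conjugate_def[of G g h] by (simp add: conjugate_mult)
  also have "\<dots> = z"
    using assms h by (simp add: conjugate_inv_of_inverted conjugate_inv)
  finally show "y \<in> centralizer G {z}"
    using centralizer_eq[of "{z}"] assms y h by simp
qed

lemma rcosets_right_action:
  assumes P: "subgroup P G" and X: "X \<subseteq> carrier G"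
    and closed: "\<And>x h. x \<in> X \<Longrightarrow> h \<in> P \<Longrightarrow> x \<otimes> h \<in> X"
  shows "group_action (G\<lparr>carrier := P\<rparr>) ((\<lambda>x. P #> x) ` X)
    (\<lambda>h. \<lambda>S\<in>(\<lambda>x. P #> x) ` X. S #> inv h)"
proof (rule group_actionI)
  have P_carrier: "P \<subseteq> carrier G" using P subgroup.subset by blast
  then have cosets: "S \<subseteq> carrier G" if "S \<in> (\<lambda>x. P #> x) ` X" for S
    using that r_coset_subset_G X by blast
  show "group (G\<lparr>carrier := P\<rparr>)" by (rule subgroup_imp_group[OF P])
  show "S #> inv \<one>\<^bsub>G\<lparr>carrier := P\<rparr>\<^esub> = S" if "S \<in> (\<lambda>x. P #> x) ` X" for S
    using cosets[OF that] by simp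
  show "S #> inv (h \<otimes>\<^bsub>G\<lparr>carrier := P\<rparr>\<^esub> k) = S #> inv k #> inv h"
    if "h \<in> carrier (G\<lparr>carrier := P\<rparr>)" "k \<in> carrier (G\<lparr>carrier := P\<rparr>)"
      and "S \<in> (\<lambda>x. P #> x) ` X" for h k S
  proof -
    have "h \<in> carrier G" "k \<in> carrier G" using that P_carrier by auto
    then show ?thesis using cosets[OF that(3)] by (simp add: inv_mult_group coset_mult_assoc)
  qed
  show "S #> inv h \<in> (\<lambda>x. P #> x) ` X"
    if h: "h \<in> carrier (G\<lparr>carrier := P\<rparr>)" and S: "S \<in> (\<lambda>x. P #> x) ` X" for h S
  proof -
    obtain x where x: "x \<in> X" and S_eq: "S = P #> x" using S by blast
    have "inv h \<in> P" using subgroup.m_inv_closed[OF P] h by simp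
    then have "S #> inv h = P #> (x \<otimes> inv h)"
      using coset_mult_assoc[OF P_carrier] x X P_carrier S_eq by auto
    then show ?thesis using closed[OF x \<open>inv h \<in> P\<close>] by blast
  qed
qed

lemma sylow_normalizer_meets_rcoset:
  assumes fin: "finite (carrier G)" and p: "prime p" and sylow: "sylow_subgroup G p P"
    and C: "subgroup C G" "P \<subseteq> C" and g: "g \<in> carrier G" and conj: "conjugate G g ` P \<subseteq> C"
  shows "\<exists>c\<in>C. c \<otimes> g \<in> normalizer G P"
proof -
  obtain a where P: "subgroup P G" and card_P: "card P = p ^ a"
    using sylow unfolding sylow_subgroup_def by blast
  have P_carrier: "P \<subseteq> carrier G" and C_carrier: "C \<subseteq> carrier G"
    using P C(1) subgroup.subset by blast+
  have Cg: "C #> g \<subseteq> carrier G" by (rule r_coset_subset_G[OF C_carrier g])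
  have Cg_closed: "h \<otimes> x \<in> C #> g" "x \<otimes> h \<in> C #> g" if h: "h \<in> P" and x_in: "x \<in> C #> g" for h x
  proof -
    obtain c where c: "c \<in> C" and x: "x = c \<otimes> g" using x_in unfolding r_coset_def by blast
    have "h \<otimes> c \<in> C" "c \<otimes> conjugate G g h \<in> C"
      using subgroup.m_closed[OF C(1)] C(2) conj h c by blast+
    moreover have "h \<in> carrier G" "c \<in> carrier G" using h c P_carrier C_carrier by auto
    then have "h \<otimes> x = h \<otimes> c \<otimes> g" "x \<otimes> h = c \<otimes> conjugate G g h \<otimes> g"
      using x g by (simp_all add: conjugate_def m_assoc)
    ultimately show "h \<otimes> x \<in> C #> g" "x \<otimes> h \<in> C #> g" unfolding r_coset_def by auto
  qed
  define \<Omega> where "\<Omega> = (\<lambda>x. P #> x) ` (C #> g)"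
  have "card \<Omega> * card P = card (C #> g)"
    unfolding \<Omega>_def using card_rcosets_image[OF P Cg finite_subset[OF Cg fin]] Cg_closed(1) .
  also have "card (C #> g) = card C"
    using card_rcosets_equal[OF rcosetsI[OF C_carrier g] C_carrier] by simp
  finally have "card \<Omega> = card C div card P"
    using finite_subset[OF P_carrier fin] subgroup.one_closed[OF P]
    by (metis card_gt_0_iff empty_iff nonzero_mult_div_cancel_right neq0_conv)
  then have not_dvd: "\<not> p dvd card \<Omega>"
    using sylow_index_not_dvd_in_subgroup[OF fin sylow C] by simp
  have finite_\<Omega>: "finite \<Omega>" unfolding \<Omega>_def using finite_subset[OF Cg fin] by simp
  have order_P: "order (G\<lparr>carrier := P\<rparr>) = p ^ a" using card_P by (simp add: order_def)
  have "group_action (G\<lparr>carrier := P\<rparr>) \<Omega> (\<lambda>h. \<lambda>S\<in>\<Omega>. S #> inv h)"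
    unfolding \<Omega>_def using rcosets_right_action[OF P Cg] Cg_closed(2) .
  from group_action.p_group_fixed_point[OF this finite_\<Omega> p order_P not_dvd]
  obtain x where x: "x \<in> C #> g" and fixed: "\<forall>h\<in>P. P #> x #> inv h = P #> x"
    unfolding \<Omega>_def by auto
  have "x \<in> normalizer G P"
  proof (rule rcoset_fixed_imp_normalizer[OF P finite_subset[OF P_carrier fin]])
    show "x \<in> carrier G" using x Cg by blast
    show "P #> x #> h = P #> x" if h: "h \<in> P" for h
      using fixed subgroup.m_inv_closed[OF P h] subgroup.mem_carrier[OF P h] by (metis inv_inv)
  qed
  then show ?thesis using x unfolding r_coset_def by blast
qed

lemma subgroup_centralizing_or_inverting:
  assumes "z \<in> carrier G"
  shows "subgroup {x \<in> carrier G. conjugate G x z \<in> {z, inv z}} G" (is "subgroup ?M G")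
proof (rule subgroupI)
  have "\<one> \<in> ?M" using assms by simp
  then show "?M \<noteq> {}" by blast
  fix x y assume x: "x \<in> ?M" and y: "y \<in> ?M"
  show "x \<otimes> y \<in> ?M" using x y assms by (auto simp: conjugate_mult conjugate_inv)
  have x_carrier: "x \<in> carrier G" and "conjugate G x z = z \<or> conjugate G x z = inv z"
    using x by auto
  then have "conjugate G (inv x) z = z \<or> conjugate G (inv x) z = inv z"
    using conjugate_inv_conjugate[OF x_carrier assms] conjugate_inv_of_inverted[OF x_carrier assms]
    by metis
  then show "inv x \<in> ?M" using x_carrier by simp
qed auto

lemma inverting_eq_rcoset_centralizer:
  assumes N: "subgroup N G" and n: "n \<in> N" and z: "z \<in> carrier G"
    and inverts: "conjugate G n z = inv z"
  shows "{x \<in> N. conjugate G x z = inv z} = (N \<inter> centralizer G {z}) #> n"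
proof -
  have N_carrier: "N \<subseteq> carrier G" using N subgroup.subset by blast
  have n_carrier: "n \<in> carrier G" using n N_carrier by blast
  have centralizing: "N \<inter> centralizer G {z} = {x \<in> N. conjugate G x z = z}"
    using centralizer_eq[of "{z}"] z N_carrier by auto
  show ?thesis
  proof (intro equalityI subsetI)
    fix y assume y: "y \<in> {x \<in> N. conjugate G x z = inv z}"
    then have y_carrier: "y \<in> carrier G" using N_carrier by blast
    have "conjugate G (y \<otimes> inv n) z = z"
      using y y_carrier n_carrier z conjugate_inv_of_inverted[OF n_carrier z inverts]
      by (simp add: conjugate_mult conjugate_inv)
    then have "y \<otimes> inv n \<in> N \<inter> centralizer G {z}"
      using y subgroup.m_closed[OF N _ subgroup.m_inv_closed[OF N n]] unfolding centralizing by blast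
    moreover have "y = y \<otimes> inv n \<otimes> n" using y_carrier n_carrier by (simp add: m_assoc)
    ultimately show "y \<in> (N \<inter> centralizer G {z}) #> n" unfolding r_coset_def by blast
  next
    fix y assume "y \<in> (N \<inter> centralizer G {z}) #> n"
    then obtain x where x: "x \<in> N" "conjugate G x z = z" and y: "y = x \<otimes> n"
      unfolding r_coset_def centralizing by blast
    have "x \<in> carrier G" using x N_carrier by blast
    then have "conjugate G y z = inv z"
      using x n_carrier z inverts unfolding y by (simp add: conjugate_mult conjugate_inv)
    then show "y \<in> {x \<in> N. conjugate G x z = inv z}" using subgroup.m_closed[OF N x(1) n] y by blast
  qed
qed

lemma double_card_centralizer_dvd:
  assumes N: "subgroup N G" and "finite N" and n: "n \<in> N" and z: "z \<in> carrier G"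
    and inverts: "conjugate G n z = inv z" and "inv z \<noteq> z"
  shows "2 * card (N \<inter> centralizer G {z}) dvd card N"
proof -
  have N_carrier: "N \<subseteq> carrier G" using N subgroup.subset by blast
  define A where "A = N \<inter> centralizer G {z}"
  define B where "B = {x \<in> N. conjugate G x z = inv z}"
  have A_eq: "A = {x \<in> N. conjugate G x z = z}"
    unfolding A_def using centralizer_eq[of "{z}"] z N_carrier by auto
  have "A \<subseteq> carrier G" "n \<in> carrier G" using N_carrier n unfolding A_def by auto
  then have "card B = card A"
    using inverting_eq_rcoset_centralizer[OF N n z inverts] card_rcosets_equal[OF rcosetsI]
    unfolding A_def B_def by metis
  moreover have "finite A" "finite B" using \<open>finite N\<close> unfolding A_def B_def by auto
  moreover have "A \<inter> B = {}" using \<open>inv z \<noteq> z\<close> unfolding A_eq B_def by auto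
  ultimately have "card (A \<union> B) = 2 * card A" by (simp add: card_Un_disjoint)
  moreover have "A \<union> B = N \<inter> {x \<in> carrier G. conjugate G x z \<in> {z, inv z}}"
    using N_carrier unfolding A_eq B_def by auto
  then have "subgroup (A \<union> B) G"
    using subgroups_Inter_pair[OF N subgroup_centralizing_or_inverting[OF z]] by simp
  then have "card (A \<union> B) dvd card N"
    by (rule card_subgroup_dvd[OF _ N]) (auto simp: A_def B_def)
  ultimately show ?thesis unfolding A_def by simp
qed

lemma odd_card_inv_eq_self_imp_one:
  assumes H: "subgroup H G" and "odd (card H)" and "x \<in> H" and "inv x = x"
  shows "x = \<one>"
proof -
  have x: "x \<in> carrier G" using subgroup.mem_carrier[OF H \<open>x \<in> H\<close>] .
  have "x [^] (2::nat) = \<one>"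
    using x \<open>inv x = x\<close> r_inv[OF x] by (simp add: numeral_2_eq_2)
  then have ord_dvd_2: "ord x dvd 2" using pow_eq_id[OF x] by simp
  have "x [^] card H = \<one>"
    using group.pow_order_eq_1[OF subgroup_imp_group[OF H], of x] \<open>x \<in> H\<close>
    by (simp add: order_def nat_pow_consistent[symmetric])
  then have "ord x dvd card H" using pow_eq_id[OF x] by simp
  then have "odd (ord x)" using \<open>odd (card H)\<close> by (meson dvd_trans)
  moreover have "ord x \<le> 2" using dvd_imp_le[OF ord_dvd_2] by simp
  ultimately have "ord x = 1" by presburger
  then show ?thesis using ord_eq_1[OF x] by simp
qed

lemma even_order_Mod:
  assumes "finite (carrier G)" and K: "subgroup K G" and H: "subgroup H G" and "K \<subseteq> H"
    and "2 * card H dvd order G"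
  shows "even (order (G Mod K))"
proof -
  obtain u where u: "order G = 2 * card H * u" using assms(5) by (rule dvdE)
  obtain v where v: "card H = card K * v" using card_subgroup_dvd[OF K H \<open>K \<subseteq> H\<close>] by (rule dvdE)
  have "card K > 0"
    using finite_subset[OF subgroup.subset[OF K] assms(1)] subgroup.one_closed[OF K]
    by (auto simp: card_gt_0_iff)
  moreover have "card (rcosets K) * card K = (2 * u * v) * card K"
    unfolding lagrange[OF K] u v by (simp add: algebra_simps)
  ultimately show ?thesis by (simp add: order_def FactGroup_def)
qed

lemma group_center_subset_centralizer:
  assumes "P \<subseteq> carrier G" and "z \<in> group_center G P"
  shows "P \<subseteq> centralizer G {z}" and "centralizer G P \<subseteq> centralizer G {z}"
  using assms unfolding centralizer_def group_center_def by auto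

lemma sylow_normalizer_inverts_central:
  assumes "finite (carrier G)" and "prime p" and "sylow_subgroup G p P"
    and center: "z \<in> group_center G P" and g: "g \<in> carrier G" and inverts: "conjugate G g z = inv z"
  shows "\<exists>n\<in>normalizer G P. conjugate G n z = inv z"
proof -
  have P_carrier: "P \<subseteq> carrier G"
    using assms(3) subgroup.subset unfolding sylow_subgroup_def by blast
  have z: "z \<in> carrier G" using center P_carrier unfolding group_center_def by auto
  define C where "C = centralizer G {z}"
  have C: "subgroup C G" unfolding C_def using centralizer_subgroup z by simp
  have P_C: "P \<subseteq> C"
    unfolding C_def by (rule group_center_subset_centralizer(1)[OF P_carrier center])
  then have "conjugate G g ` P \<subseteq> C"
    using conjugate_centralizer_of_inverted[OF g z inverts] unfolding C_def by blast
  then obtain c where c: "c \<in> C" and n: "c \<otimes> g \<in> normalizer G P"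
    using sylow_normalizer_meets_rcoset[OF assms(1-3) C P_C g] by blast
  have "conjugate G (c \<otimes> g) z = inv z"
    using c g z inverts centralizer_eq[of "{z}"] unfolding C_def
    by (simp add: conjugate_mult conjugate_inv)
  then show ?thesis using n by blast
qed

lemma even_order_normalizer_Mod:
  assumes fin: "finite (carrier G)" and P: "subgroup P G" and center: "z \<in> group_center G P"
    and n: "n \<in> normalizer G P" and "conjugate G n z = inv z" and "inv z \<noteq> z"
  shows "even (order (G\<lparr>carrier := normalizer G P\<rparr> Mod (P <#> centralizer G P)))"
proof -
  have P_carrier: "P \<subseteq> carrier G" using P subgroup.subset by blast
  have z: "z \<in> carrier G" using center P_carrier unfolding group_center_def by auto
  define N where "N = normalizer G P"
  define C where "C = centralizer G {z}"
  have N: "subgroup N G" unfolding N_def by (rule normalizer_imp_subgroup[OF P_carrier])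
  have C: "subgroup C G" unfolding C_def using centralizer_subgroup z by simp
  have "2 * card (N \<inter> C) dvd card N"
    using double_card_centralizer_dvd[OF N finite_subset[OF subgroup.subset[OF N] fin]] assms(4-6) z
    unfolding N_def C_def by blast
  have "even (order (G\<lparr>carrier := N\<rparr> Mod (P <#> centralizer G P)))"
  proof (rule group.even_order_Mod[OF subgroup_imp_group[OF N]])
    show "finite (carrier (G\<lparr>carrier := N\<rparr>))"
      using finite_subset[OF subgroup.subset[OF N] fin] by simp
    show "subgroup (P <#> centralizer G P) (G\<lparr>carrier := N\<rparr>)"
      unfolding N_def by (rule subgroup_set_mult_centralizer[OF P])
    show "subgroup (N \<inter> C) (G\<lparr>carrier := N\<rparr>)"
      using subgroup_incl[OF subgroups_Inter_pair[OF N C] N] by blast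
    have "P <#> centralizer G P \<subseteq> C"
      using subgroup.m_closed[OF C] group_center_subset_centralizer[OF P_carrier center]
      unfolding C_def set_mult_def by blast
    then show "P <#> centralizer G P \<subseteq> N \<inter> C"
      using subgroup.subset[OF subgroup_set_mult_centralizer[OF P]] unfolding N_def by simp
    show "2 * card (N \<inter> C) dvd order (G\<lparr>carrier := N\<rparr>)"
      using \<open>2 * card (N \<inter> C) dvd card N\<close> by (simp add: order_def)
  qed
  then show ?thesis unfolding N_def .
qed

end

theorem lemma2p3:
  fixes G (structure) and p :: nat and P :: "'a set"
  assumes "group G" and "finite (carrier G)"
    and "prime p" and "odd p"
    and "sylow_subgroup G p P"
    and "P \<noteq> {\<one>}"
    and "odd (order ((G\<lparr>carrier := normalizer G P\<rparr>) Mod (P <#> centralizer G P)))"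
  shows "\<forall>z \<in> group_center G P. z \<noteq> \<one> \<longrightarrow> \<not> real_in G z"
proof (intro ballI impI notI)
  fix z assume center: "z \<in> group_center G P" and nontrivial: "z \<noteq> \<one>" and "real_in G z"
  interpret group G by fact
  obtain a where P: "subgroup P G" and card_P: "card P = p ^ a"
    using assms(5) unfolding sylow_subgroup_def by blast
  obtain g where "g \<in> carrier G" and "conjugate G g z = inv z"
    using \<open>real_in G z\<close> unfolding real_in_def conjugate_def by blast
  then obtain n where n: "n \<in> normalizer G P" and inverts: "conjugate G n z = inv z"
    using sylow_normalizer_inverts_central[OF assms(2,3,5) center] by blast
  have "z \<in> P" using center unfolding group_center_def by simp
  then have "inv z \<noteq> z"
    using odd_card_inv_eq_self_imp_one[OF P] nontrivial card_P \<open>odd p\<close> by auto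
  then show False
    using even_order_normalizer_Mod[OF assms(2) P center n inverts] assms(7) by simp
qed

end
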